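(* Let $A=\mathrm{diag}(G_1,\dots,G_m,[1])\in\mathbb{R}^{n\times n}$ (where the trailing block $[1]$ may or may not be present), with $G_j=\begin{bmatrix}c_j&s_j\\-s_j&c_j\end{bmatrix}$, $c_j^2+s_j^2=1$, $s_j\neq 0$, and $0<c_1<c_2<\cdots<c_m$. Let $v_0\in\mathbb{R}^n$ be a unit norm vector with $d(A,v_0)\geq 2$ and $v_0^{(1)}\neq 0$, and run the iteration ACI($1$) below. Then there exist an index $k_0$ and a number $0<\varrho<1$ such that for all $k\geq k_0$, $$\|v_{k+1}^{(j)}\|\leq\varrho\,\|v_k^{(j)}\|,\qquad j=2,\dots,m+1$$ (with $j=m+1$ included only when the block $[1]$ is present).
   Context: Block partitioning: every $v\in\mathbb{R}^n$ is written as $v=[v^{(1)};\dots;v^{(m)};v^{(m+1)}]$ with $v^{(j)}\in\mathbb{R}^2$ for $j=1,\dots,m$ (conforming with the blocks $G_j$) and $v^{(m+1)}\in\mathbb{R}$ (present only if the block $[1]$ is present). ACI($1$): for $k=0,1,2,\dots$: $\widetilde w_k=(A-\alpha_kI)v_k$ with $\alpha_k=v_k^TAv_k$; $w_k=\widetilde w_k/\|\widetilde w_k\|$; $\widetilde v_{k+1}=(A^T-\beta_kI)w_k$ with $\beta_k=w_k^TAw_k$; $v_{k+1}=\widetilde v_{k+1}/\|\widetilde v_{k+1}\|$. $d(A,v)$ is the grade of $v$ w.r.t. $A$ (degree of the monic polynomial $p$ of smallest degree with $p(A)v=0$); $\|\cdot\|$ is the Euclidean norm. *)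

theory Defs
  imports "Jordan_Normal_Form.Matrix" "HOL-Computational_Algebra.Polynomial"
begin

definition vnorm :: "real vec \<Rightarrow> real" where
  "vnorm v = sqrt (v \<bullet> v)"

(* dimension n = 2m (+1 if the trailing block [1] is present) *)
definition dimA :: "nat \<Rightarrow> bool \<Rightarrow> nat" where
  "dimA m t = 2 * m + (if t then 1 else 0)"

(* A = diag(G_1,...,G_m,[1]); block G_j (j = 1..m) occupies rows/cols 2(j-1), 2(j-1)+1
   (0-based), G_j = [[c_j, s_j], [-s_j, c_j]]; trailing [1] at index 2m if present *)
definition blockA :: "nat \<Rightarrow> bool \<Rightarrow> (nat \<Rightarrow> real) \<Rightarrow> (nat \<Rightarrow> real) \<Rightarrow> real mat" where
  "blockA m t c s = mat (dimA m t) (dimA m t) (\<lambda>(i, k).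
     if i < 2 * m \<and> k < 2 * m \<and> i div 2 = k div 2 then
       (let j = i div 2 + 1 in
         if i = k then c j
         else if even i then s j
         else - s j)
     else if i = 2 * m \<and> k = 2 * m then 1
     else 0)"

definition poly_apply :: "real mat \<Rightarrow> real poly \<Rightarrow> real vec \<Rightarrow> real vec" where
  "poly_apply A p v = vec (dim_row A) (\<lambda>r. \<Sum>i\<le>degree p. coeff p i * ((A ^\<^sub>m i) *\<^sub>v v) $ r)"

definition grade :: "real mat \<Rightarrow> real vec \<Rightarrow> nat" where
  "grade A v = (LEAST d. \<exists>p. lead_coeff p = 1 \<and> degree p = d \<and> poly_apply A p v = 0\<^sub>v (dim_row A))"

definition aci_step :: "real mat \<Rightarrow> real vec \<Rightarrow> real vec" where
  "aci_step A v = (let n = dim_row A;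
      \<alpha> = v \<bullet> (A *\<^sub>v v);
      wt = (A - \<alpha> \<cdot>\<^sub>m 1\<^sub>m n) *\<^sub>v v;
      w = (1 / vnorm wt) \<cdot>\<^sub>v wt;
      \<beta> = w \<bullet> (A *\<^sub>v w);
      vt = (transpose_mat A - \<beta> \<cdot>\<^sub>m 1\<^sub>m n) *\<^sub>v w
    in (1 / vnorm vt) \<cdot>\<^sub>v vt)"

primrec aci :: "real mat \<Rightarrow> real vec \<Rightarrow> nat \<Rightarrow> real vec" where
  "aci A v0 0 = v0"
| "aci A v0 (Suc k) = aci_step A (aci A v0 k)"

definition blk_norm :: "real vec \<Rightarrow> nat \<Rightarrow> real" where
  "blk_norm v j = sqrt ((v $ (2 * (j - 1)))\<^sup>2 + (v $ (2 * (j - 1) + 1))\<^sup>2)"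

definition last_norm :: "nat \<Rightarrow> real vec \<Rightarrow> real" where
  "last_norm m v = \<bar>v $ (2 * m)\<bar>"

end

theory Submission
  imports Defs
begin

text \<open>Every block of \<open>A\<close> is a rotation, so \<open>A\<close> and \<open>A\<^sup>T\<close> scale the block norms uniformly and
the squared block norms \<open>x\<^sub>j = \<parallel>v\<^sup>(\<^sup>j\<^sup>)\<parallel>\<^sup>2\<close> evolve autonomously: each half-step of ACI(1)
multiplies \<open>x\<^sub>j\<close> by \<open>1 - 2\<gamma>c\<^sub>j + \<gamma>\<^sup>2\<close> and renormalises, where the shift \<open>\<gamma> = \<Sum> c\<^sub>j x\<^sub>j\<close> is
the Rayleigh quotient (with \<open>c\<^sub>m\<^sub>+\<^sub>1 = 1\<close> for the block \<open>[1]\<close>). Since \<open>\<gamma> \<ge> c\<^sub>1\<close>, the factor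
of every block \<open>j \<ge> 2\<close> is at most a fixed \<open>q < 1\<close> times the factor of the first block.
Hence the mass outside the first block, relative to \<open>x\<^sub>1\<close>, decays geometrically, and once it
is small every half-step contracts each \<open>x\<^sub>j\<close>, \<open>j \<ge> 2\<close>, by a fixed factor \<open>\<rho> < 1\<close>.\<close>

section \<open>Block rotation matrices\<close>

definition rot_blocks :: "nat \<Rightarrow> bool \<Rightarrow> (nat \<Rightarrow> real) \<Rightarrow> (nat \<Rightarrow> real) \<Rightarrow> real \<Rightarrow> real mat" where
  "rot_blocks m t c s e = mat (dimA m t) (dimA m t) (\<lambda>(i, k).
     if i < 2 * m \<and> k < 2 * m \<and> i div 2 = k div 2 then
       (if i = k then c (i div 2 + 1) else if even i then s (i div 2 + 1) else - s (i div 2 + 1))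
     else if i = 2 * m \<and> k = 2 * m then e
     else 0)"

lemma blockA_eq_rot_blocks: "blockA m t c s = rot_blocks m t c s 1"
  unfolding blockA_def rot_blocks_def Let_def by simp

lemma dimA_cases: "i < dimA m t \<Longrightarrow> i < 2 * m \<or> (i = 2 * m \<and> t)"
  unfolding dimA_def by (auto split: if_splits)

lemma rot_blocks_carrier [simp]: "rot_blocks m t c s e \<in> carrier_mat (dimA m t) (dimA m t)"
  and dim_row_rot_blocks [simp]: "dim_row (rot_blocks m t c s e) = dimA m t"
  and dim_col_rot_blocks [simp]: "dim_col (rot_blocks m t c s e) = dimA m t"
  unfolding rot_blocks_def by auto

lemma rot_blocks_mult_vec_carrier [simp]:
  "v \<in> carrier_vec (dimA m t) \<Longrightarrow> rot_blocks m t c s e *\<^sub>v v \<in> carrier_vec (dimA m t)"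
  by (rule mult_mat_vec_carrier[OF rot_blocks_carrier])

lemma rot_blocks_minus_smult_one:
  "rot_blocks m t c s e - \<gamma> \<cdot>\<^sub>m 1\<^sub>m (dimA m t) = rot_blocks m t (\<lambda>j. c j - \<gamma>) s (e - \<gamma>)"
  by (rule eq_matI) (auto simp: rot_blocks_def dest!: dimA_cases)

lemma transpose_rot_blocks: "transpose_mat (rot_blocks m t c s e) = rot_blocks m t c (\<lambda>j. - s j) e"
proof (rule eq_matI)
  fix i k assume "i < dim_row (rot_blocks m t c (\<lambda>j. - s j) e)" "k < dim_col (rot_blocks m t c (\<lambda>j. - s j) e)"
  moreover have "i div 2 = k div 2 \<Longrightarrow> i \<noteq> k \<Longrightarrow> even i = odd k" by presburger
  ultimately show "transpose_mat (rot_blocks m t c s e) $$ (i, k) = rot_blocks m t c (\<lambda>j. - s j) e $$ (i, k)"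
    by (auto simp: rot_blocks_def)
qed auto

lemma mult_mat_vec_row_support:
  assumes "v \<in> carrier_vec (dim_col A)" "i < dim_row A" "S \<subseteq> {0..<dim_col A}"
    and "\<And>k. k < dim_col A \<Longrightarrow> k \<notin> S \<Longrightarrow> A $$ (i, k) = 0"
  shows "(A *\<^sub>v v) $ i = (\<Sum>k\<in>S. A $$ (i, k) * v $ k)"
proof -
  have "(A *\<^sub>v v) $ i = (\<Sum>k\<in>{0..<dim_col A}. A $$ (i, k) * v $ k)"
    using assms(1,2) by (simp add: scalar_prod_def)
  also have "\<dots> = (\<Sum>k\<in>S. A $$ (i, k) * v $ k)"
    using assms(3,4) by (intro sum.mono_neutral_right) auto
  finally show ?thesis .
qed

lemma rot_blocks_mult_vec_block:
  assumes v: "v \<in> carrier_vec (dimA m t)" and p: "p < m"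
  shows "(rot_blocks m t c s e *\<^sub>v v) $ (2*p) = c (Suc p) * v $ (2*p) + s (Suc p) * v $ Suc (2*p)"
    and "(rot_blocks m t c s e *\<^sub>v v) $ Suc (2*p) = - s (Suc p) * v $ (2*p) + c (Suc p) * v $ Suc (2*p)"
proof -
  let ?B = "rot_blocks m t c s e"
  have dims: "2*p < dimA m t" "Suc (2*p) < dimA m t"
    using p by (auto simp: dimA_def)
  have S: "{2*p, Suc (2*p)} \<subseteq> {0..<dim_col ?B}"
    using dims by auto
  have off_block: "k div 2 \<noteq> p" if "k \<noteq> 2*p" "k \<noteq> Suc (2*p)" for k
    using that by presburger
  have row: "(?B *\<^sub>v v) $ i = ?B $$ (i, 2*p) * v $ (2*p) + ?B $$ (i, Suc (2*p)) * v $ Suc (2*p)"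
    if "i \<in> {2*p, Suc (2*p)}" for i
  proof -
    have "(?B *\<^sub>v v) $ i = (\<Sum>k\<in>{2*p, Suc (2*p)}. ?B $$ (i, k) * v $ k)"
      using that v dims p off_block
      by (intro mult_mat_vec_row_support[OF _ _ S]) (auto simp: rot_blocks_def)
    then show ?thesis
      by simp
  qed
  have "?B $$ (2*p, 2*p) = c (Suc p)" "?B $$ (2*p, Suc (2*p)) = s (Suc p)"
    "?B $$ (Suc (2*p), 2*p) = - s (Suc p)" "?B $$ (Suc (2*p), Suc (2*p)) = c (Suc p)"
    using dims p by (auto simp: rot_blocks_def)
  with row[of "2*p"] row[of "Suc (2*p)"]
  show "(?B *\<^sub>v v) $ (2*p) = c (Suc p) * v $ (2*p) + s (Suc p) * v $ Suc (2*p)"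
    and "(?B *\<^sub>v v) $ Suc (2*p) = - s (Suc p) * v $ (2*p) + c (Suc p) * v $ Suc (2*p)"
    by simp_all
qed

lemma rot_blocks_mult_vec_last:
  assumes v: "v \<in> carrier_vec (dimA m t)" and t
  shows "(rot_blocks m t c s e *\<^sub>v v) $ (2*m) = e * v $ (2*m)"
proof -
  have "(rot_blocks m t c s e *\<^sub>v v) $ (2*m) = (\<Sum>k\<in>{2*m}. rot_blocks m t c s e $$ (2*m, k) * v $ k)"
    by (rule mult_mat_vec_row_support) (use v \<open>t\<close> in \<open>auto simp: rot_blocks_def dimA_def\<close>)
  then show ?thesis
    using \<open>t\<close> by (simp add: rot_blocks_def dimA_def)
qed

section \<open>Block weights under ACI(1)\<close>

text \<open>Squared norms of the blocks \<open>v\<^sup>(\<^sup>1\<^sup>), \<dots>, v\<^sup>(\<^sup>m\<^sup>+\<^sup>1\<^sup>)\<close>; an absent block \<open>[1]\<close> and all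
indices outside \<open>1..m+1\<close> get weight 0, so that identities between weight vectors hold
as equations of functions.\<close>

definition blk_weight :: "nat \<Rightarrow> bool \<Rightarrow> real vec \<Rightarrow> nat \<Rightarrow> real" where
  "blk_weight m t v j =
     (if j \<in> {1..m} then (v $ (2*(j-1)))\<^sup>2 + (v $ (2*(j-1)+1))\<^sup>2
      else if j = m + 1 \<and> t then (v $ (2*m))\<^sup>2
      else 0)"

definition blk_cos :: "nat \<Rightarrow> (nat \<Rightarrow> real) \<Rightarrow> nat \<Rightarrow> real" where
  "blk_cos m c j = (if j \<le> m then c j else 1)"

lemma blk_weight_nonneg: "0 \<le> blk_weight m t v j"
  unfolding blk_weight_def by auto

lemma blk_norm_eq_sqrt_blk_weight: "j \<in> {1..m} \<Longrightarrow> blk_norm v j = sqrt (blk_weight m t v j)"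
  unfolding blk_norm_def blk_weight_def by simp

lemma last_norm_eq_sqrt_blk_weight: "t \<Longrightarrow> last_norm m v = sqrt (blk_weight m t v (m+1))"
  unfolding last_norm_def blk_weight_def by simp

lemma sum_dimA:
  "(\<Sum>i\<in>{0..<dimA m t}. h i) = (\<Sum>p<m. h (2*p) + h (Suc (2*p))) + (if t then h (2*m) else 0)"
proof -
  have "(\<Sum>i<2*n. h i) = (\<Sum>p<n. h (2*p) + h (Suc (2*p)))" for n
    by (induction n) (simp_all add: algebra_simps)
  then show ?thesis
    unfolding dimA_def atLeast0LessThan by (cases t) simp_all
qed

lemma sum_blk_weight:
  "(\<Sum>j=1..m+1. f j * blk_weight m t v j) =
     (\<Sum>p<m. f (Suc p) * ((v $ (2*p))\<^sup>2 + (v $ Suc (2*p))\<^sup>2)) + (if t then f (m+1) * (v $ (2*m))\<^sup>2 else 0)"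
proof -
  have "(\<Sum>j=1..m. f j * blk_weight m t v j) = (\<Sum>p<m. f (Suc p) * ((v $ (2*p))\<^sup>2 + (v $ Suc (2*p))\<^sup>2))"
    unfolding One_nat_def sum.atLeast1_atMost_eq by (intro sum.cong refl) (simp add: blk_weight_def)
  then show ?thesis
    by (simp add: blk_weight_def)
qed

lemma scalar_prod_self_blk_weight:
  assumes "v \<in> carrier_vec (dimA m t)"
  shows "v \<bullet> v = (\<Sum>j=1..m+1. blk_weight m t v j)"
  using assms sum_blk_weight[of "\<lambda>_. 1" m t v]
  by (simp add: scalar_prod_def sum_dimA power2_eq_square)

lemma rot_blocks_quadratic_form:
  assumes v: "v \<in> carrier_vec (dimA m t)"
  shows "v \<bullet> (rot_blocks m t c s 1 *\<^sub>v v) = (\<Sum>j=1..m+1. blk_cos m c j * blk_weight m t v j)"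
proof -
  let ?Bv = "rot_blocks m t c s 1 *\<^sub>v v"
  have blocks: "(\<Sum>p<m. v $ (2*p) * ?Bv $ (2*p) + v $ Suc (2*p) * ?Bv $ Suc (2*p))
      = (\<Sum>p<m. blk_cos m c (Suc p) * ((v $ (2*p))\<^sup>2 + (v $ Suc (2*p))\<^sup>2))"
    by (intro sum.cong refl)
      (simp add: rot_blocks_mult_vec_block[OF v] blk_cos_def power2_eq_square, simp add: algebra_simps)
  have last: "(if t then v $ (2*m) * ?Bv $ (2*m) else 0) = (if t then (v $ (2*m))\<^sup>2 else 0)"
  proof (cases t)
    case True
    show ?thesis
      unfolding rot_blocks_mult_vec_last[OF v True] by (simp add: power2_eq_square)
  qed simp
  have "v \<bullet> ?Bv = (\<Sum>i\<in>{0..<dimA m t}. v $ i * ?Bv $ i)"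
    by (simp only: scalar_prod_def dim_mult_mat_vec dim_row_rot_blocks)
  then show ?thesis
    unfolding sum_dimA blocks last sum_blk_weight by (simp add: blk_cos_def)
qed

text \<open>\<open>gain \<gamma> (cos \<theta>) = \<bar>e\<^sup>i\<^sup>\<theta> - \<gamma>\<bar>\<^sup>2\<close> is the factor by which a rotation block shifted by \<open>\<gamma>\<close> scales
squared norms.\<close>

definition gain :: "real \<Rightarrow> real \<Rightarrow> real" where
  "gain \<gamma> c = 1 - 2 * \<gamma> * c + \<gamma>\<^sup>2"

definition rayleigh :: "nat \<Rightarrow> (nat \<Rightarrow> real) \<Rightarrow> (nat \<Rightarrow> real) \<Rightarrow> real" where
  "rayleigh M k x = (\<Sum>i=1..M. k i * x i)"

definition weight_step :: "nat \<Rightarrow> (nat \<Rightarrow> real) \<Rightarrow> (nat \<Rightarrow> real) \<Rightarrow> nat \<Rightarrow> real" where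
  "weight_step M k x j =
     gain (rayleigh M k x) (k j) * x j / (\<Sum>i=1..M. gain (rayleigh M k x) (k i) * x i)"

lemma blk_weight_shift:
  assumes v: "v \<in> carrier_vec (dimA m t)" and cs: "\<forall>j\<in>{1..m}. (c j)\<^sup>2 + (s j)\<^sup>2 = 1"
  shows "blk_weight m t (rot_blocks m t (\<lambda>j. c j - \<gamma>) s (1 - \<gamma>) *\<^sub>v v) j
           = gain \<gamma> (blk_cos m c j) * blk_weight m t v j"
proof -
  consider (block) "j \<in> {1..m}" | (last) "j = m + 1" t | (none) "j \<notin> {1..m}" "j = m + 1 \<longrightarrow> \<not> t"
    by blast
  then show ?thesis
  proof cases
    case block
    then obtain p where j: "j = Suc p" and p: "p < m"
      by (cases j) auto
    have "gain \<gamma> (c j) = (c j - \<gamma>)\<^sup>2 + (s j)\<^sup>2"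
      using cs block by (auto simp: gain_def power2_eq_square algebra_simps)
    then show ?thesis
      using p by (simp add: j blk_weight_def blk_cos_def rot_blocks_mult_vec_block[OF v p]
          power2_eq_square, simp add: algebra_simps)
  next
    case last
    then show ?thesis
      unfolding blk_weight_def rot_blocks_mult_vec_last[OF v last(2)]
      by (simp add: blk_cos_def gain_def power2_eq_square algebra_simps)
  qed (auto simp: blk_weight_def)
qed

lemma blk_weight_smult:
  assumes "v \<in> carrier_vec (dimA m t)"
  shows "blk_weight m t (r \<cdot>\<^sub>v v) j = r\<^sup>2 * blk_weight m t v j"
  using assms by (auto simp: blk_weight_def dimA_def power2_eq_square algebra_simps)

lemma blk_weight_normalized_shift:
  assumes v: "v \<in> carrier_vec (dimA m t)" and cs: "\<forall>j\<in>{1..m}. (c j)\<^sup>2 + (s j)\<^sup>2 = 1"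
    and \<gamma>: "\<gamma> = v \<bullet> (rot_blocks m t c s 1 *\<^sub>v v)"
    and u: "u = rot_blocks m t (\<lambda>j. c j - \<gamma>) s (1 - \<gamma>) *\<^sub>v v"
  shows "blk_weight m t ((1 / vnorm u) \<cdot>\<^sub>v u) = weight_step (m+1) (blk_cos m c) (blk_weight m t v)"
proof
  fix j
  have u_carrier: "u \<in> carrier_vec (dimA m t)"
    unfolding u using v by simp
  have "\<gamma> = rayleigh (m+1) (blk_cos m c) (blk_weight m t v)"
    unfolding \<gamma> rayleigh_def by (rule rot_blocks_quadratic_form[OF v])
  moreover have "u \<bullet> u = (\<Sum>i=1..m+1. gain \<gamma> (blk_cos m c i) * blk_weight m t v i)"
    unfolding scalar_prod_self_blk_weight[OF u_carrier] unfolding u blk_weight_shift[OF v cs] ..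
  moreover have "(1 / vnorm u)\<^sup>2 = 1 / (u \<bullet> u)"
    using sum_nonneg[of "{1..m+1}" "blk_weight m t u"] blk_weight_nonneg
    by (simp add: vnorm_def power_divide scalar_prod_self_blk_weight[OF u_carrier])
  ultimately show "blk_weight m t ((1 / vnorm u) \<cdot>\<^sub>v u) j = weight_step (m+1) (blk_cos m c) (blk_weight m t v) j"
    unfolding blk_weight_smult[OF u_carrier] weight_step_def
    by (simp add: u blk_weight_shift[OF v cs])
qed

lemma aci_step_carrier:
  "v \<in> carrier_vec (dimA m t) \<Longrightarrow> aci_step (blockA m t c s) v \<in> carrier_vec (dimA m t)"
  by (simp add: aci_step_def Let_def blockA_eq_rot_blocks transpose_rot_blocks rot_blocks_minus_smult_one)

lemma blk_weight_aci_step: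
  assumes v: "v \<in> carrier_vec (dimA m t)" and cs: "\<forall>j\<in>{1..m}. (c j)\<^sup>2 + (s j)\<^sup>2 = 1"
  shows "blk_weight m t (aci_step (blockA m t c s) v)
           = weight_step (m+1) (blk_cos m c) (weight_step (m+1) (blk_cos m c) (blk_weight m t v))"
proof -
  let ?B = "rot_blocks m t c s 1" and ?W = "weight_step (m+1) (blk_cos m c)"
  define \<alpha> where "\<alpha> = v \<bullet> (?B *\<^sub>v v)"
  define w where "w = (1 / vnorm (rot_blocks m t (\<lambda>j. c j - \<alpha>) s (1 - \<alpha>) *\<^sub>v v)) \<cdot>\<^sub>v
                        (rot_blocks m t (\<lambda>j. c j - \<alpha>) s (1 - \<alpha>) *\<^sub>v v)"
  define \<beta> where "\<beta> = w \<bullet> (?B *\<^sub>v w)"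
  have w_carrier: "w \<in> carrier_vec (dimA m t)"
    unfolding w_def using v by simp
  have w_weights: "blk_weight m t w = ?W (blk_weight m t v)"
    unfolding w_def by (rule blk_weight_normalized_shift[OF v cs \<alpha>_def refl])
  text \<open>\<open>A\<^sup>T\<close> is again of block rotation form, with \<open>s\<close> negated; the weights only see \<open>s\<^sup>2\<close>.\<close>
  have cs': "\<forall>j\<in>{1..m}. (c j)\<^sup>2 + (- s j)\<^sup>2 = 1" using cs by simp
  have "\<beta> = w \<bullet> (rot_blocks m t c (\<lambda>j. - s j) 1 *\<^sub>v w)"
    unfolding \<beta>_def rot_blocks_quadratic_form[OF w_carrier] ..
  note second = blk_weight_normalized_shift[OF w_carrier cs' this refl]
  have step: "aci_step (blockA m t c s) v
          = (1 / vnorm (rot_blocks m t (\<lambda>j. c j - \<beta>) (\<lambda>j. - s j) (1 - \<beta>) *\<^sub>v w)) \<cdot>\<^sub>v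
              (rot_blocks m t (\<lambda>j. c j - \<beta>) (\<lambda>j. - s j) (1 - \<beta>) *\<^sub>v w)"
    unfolding aci_step_def Let_def blockA_eq_rot_blocks dim_row_rot_blocks
    unfolding transpose_rot_blocks rot_blocks_minus_smult_one
    unfolding \<beta>_def w_def \<alpha>_def ..
  show ?thesis
    by (simp only: step second w_weights)
qed

lemma blk_weight_aci:
  assumes v0: "v0 \<in> carrier_vec (dimA m t)" and cs: "\<forall>j\<in>{1..m}. (c j)\<^sup>2 + (s j)\<^sup>2 = 1"
  shows "blk_weight m t (aci (blockA m t c s) v0 k)
           = (weight_step (m+1) (blk_cos m c) ^^ (2*k)) (blk_weight m t v0)"
proof -
  have carrier: "aci (blockA m t c s) v0 n \<in> carrier_vec (dimA m t)" for n
    by (induction n) (simp_all add: v0 aci_step_carrier)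
  show ?thesis
    by (induction k) (simp_all add: blk_weight_aci_step[OF carrier cs])
qed

section \<open>Contraction of the weight recursion\<close>

definition prob_weights :: "nat \<Rightarrow> (nat \<Rightarrow> real) \<Rightarrow> bool" where
  "prob_weights M x \<longleftrightarrow> (\<forall>i\<in>{1..M}. 0 \<le> x i) \<and> (\<Sum>i=1..M. x i) = 1 \<and> 0 < x 1"

definition tail_ratio :: "nat \<Rightarrow> (nat \<Rightarrow> real) \<Rightarrow> real" where
  "tail_ratio M x = (\<Sum>i=2..M. x i) / x 1"

locale gapped_cosines =
  fixes M :: nat and k :: "nat \<Rightarrow> real" and d :: real
  assumes M_pos: "1 \<le> M"
    and k1_pos: "0 < k 1" and k1_less: "k 1 < d" and d_le_one: "d \<le> 1"
    and k_le_one: "\<forall>i\<in>{1..M}. k i \<le> 1" and k_tail_ge: "\<forall>i\<in>{2..M}. d \<le> k i"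
begin

text \<open>For \<open>k 1 \<le> \<gamma> \<le> 1\<close> we have \<open>gain \<gamma> (k 1) \<le> 2 (1 - k 1)\<close>, while the gains of the
other blocks are smaller by at least \<open>2 k 1 (d - k 1)\<close>; the quotient gives the factor below.\<close>

definition gap_factor :: real where
  "gap_factor = 1 - k 1 * (d - k 1) / (1 - k 1)"

lemma k1_less_one: "k 1 < 1"
  using k1_less d_le_one by simp

lemma k_ge_k1:
  assumes "i \<in> {1..M}"
  shows "k 1 \<le> k i"
proof (cases "i = 1")
  case False
  then have "d \<le> k i"
    using assms k_tail_ge by auto
  then show ?thesis
    using k1_less by simp
qed simp

lemma gap_factor_nonneg: "0 \<le> gap_factor"
proof -
  have "k 1 * (d - k 1) \<le> 1 * (1 - k 1)"
    using k1_pos k1_less d_le_one k1_less_one by (intro mult_mono) auto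
  then have "k 1 * (d - k 1) / (1 - k 1) \<le> 1"
    using k1_less_one by (simp add: divide_le_eq)
  then show ?thesis
    unfolding gap_factor_def by simp
qed

lemma gap_factor_less_one: "gap_factor < 1"
  unfolding gap_factor_def using k1_pos k1_less k1_less_one by simp

lemma gain_eq: "gain \<gamma> c = (\<gamma> - c)\<^sup>2 + (1 - c\<^sup>2)"
  unfolding gain_def by (simp add: power2_eq_square algebra_simps)

lemma gain_nonneg: "i \<in> {1..M} \<Longrightarrow> 0 \<le> gain \<gamma> (k i)"
  using k_ge_k1[of i] k1_pos k_le_one by (simp add: gain_eq abs_square_le_1)

lemma gain_k1_pos: "0 < gain \<gamma> (k 1)"
  using k1_pos k1_less_one by (simp add: gain_eq abs_square_less_1 add_nonneg_pos)

lemma gain_tail_le: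
  assumes \<gamma>: "k 1 \<le> \<gamma>" "\<gamma> \<le> 1" and i: "i \<in> {2..M}"
  shows "gain \<gamma> (k i) \<le> gap_factor * gain \<gamma> (k 1)"
proof -
  have "k 1 * (d - k 1) \<le> \<gamma> * (k i - k 1)"
    using \<gamma> k1_pos k1_less k_tail_ge i by (intro mult_mono) auto
  then have drop: "gain \<gamma> (k i) \<le> gain \<gamma> (k 1) - 2 * (k 1 * (d - k 1))"
    by (simp add: gain_def algebra_simps)
  have "gain \<gamma> (k 1) \<le> 2 * (1 - k 1)"
  proof -
    have "(\<gamma> - 1) * (\<gamma> + 1) \<le> (\<gamma> - 1) * (2 * k 1)"
      using \<gamma> k1_less_one by (intro mult_left_mono_neg) auto
    then show ?thesis
      by (simp add: gain_def power2_eq_square algebra_simps)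
  qed
  then have "k 1 * (d - k 1) / (1 - k 1) * gain \<gamma> (k 1) \<le> k 1 * (d - k 1) / (1 - k 1) * (2 * (1 - k 1))"
    using k1_pos k1_less k1_less_one by (intro mult_left_mono) auto
  also have "\<dots> = 2 * (k 1 * (d - k 1))"
    using k1_less_one by (simp add: field_simps)
  finally show ?thesis
    using drop unfolding gap_factor_def by (simp add: algebra_simps)
qed

lemma rayleigh_bounds:
  assumes "prob_weights M x"
  shows "k 1 \<le> rayleigh M k x" and "rayleigh M k x \<le> 1"
proof -
  have nonneg: "\<forall>i\<in>{1..M}. 0 \<le> x i" and sum_one: "(\<Sum>i=1..M. x i) = 1"
    using assms unfolding prob_weights_def by auto
  have "(\<Sum>i=1..M. k 1 * x i) \<le> rayleigh M k x"
    unfolding rayleigh_def using nonneg k_ge_k1 by (intro sum_mono mult_right_mono) auto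
  then show "k 1 \<le> rayleigh M k x"
    using sum_one by (simp add: sum_distrib_left[symmetric])
  have "rayleigh M k x \<le> (\<Sum>i=1..M. 1 * x i)"
    unfolding rayleigh_def using nonneg k_le_one by (intro sum_mono mult_right_mono) auto
  then show "rayleigh M k x \<le> 1"
    using sum_one by simp
qed

lemma sum_atLeast1_split: "(\<Sum>i=1..M. f i) = f 1 + (\<Sum>i=2..M. f i)"
  using sum.atLeast_Suc_atMost[OF M_pos, of f] by (simp add: numeral_2_eq_2)

lemma weight_step_denominator_ge:
  assumes "prob_weights M x"
  shows "gain (rayleigh M k x) (k 1) * x 1 \<le> (\<Sum>i=1..M. gain (rayleigh M k x) (k i) * x i)"
  using assms gain_nonneg unfolding prob_weights_def sum_atLeast1_split[of "\<lambda>i. gain _ (k i) * x i"]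
  by (auto intro!: sum_nonneg)

lemma prob_weights_weight_step:
  assumes x: "prob_weights M x"
  shows "prob_weights M (weight_step M k x)"
proof -
  let ?g = "\<lambda>i. gain (rayleigh M k x) (k i)"
  have pos: "0 < ?g 1 * x 1"
    using x gain_k1_pos unfolding prob_weights_def by simp
  then have N_pos: "0 < (\<Sum>i=1..M. ?g i * x i)"
    using weight_step_denominator_ge[OF x] by linarith
  show ?thesis
    using x N_pos pos gain_nonneg unfolding prob_weights_def weight_step_def
    by (auto simp: sum_divide_distrib[symmetric])
qed

lemma inverse_first_weight: "prob_weights M x \<Longrightarrow> 1 / x 1 = 1 + tail_ratio M x"
  unfolding prob_weights_def tail_ratio_def sum_atLeast1_split by (simp add: field_simps)

lemma tail_ratio_nonneg: "prob_weights M x \<Longrightarrow> 0 \<le> tail_ratio M x"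
  unfolding prob_weights_def tail_ratio_def by (auto intro!: sum_nonneg divide_nonneg_pos)

lemma tail_ratio_weight_step:
  assumes x: "prob_weights M x"
  shows "tail_ratio M (weight_step M k x) \<le> gap_factor * tail_ratio M x"
proof -
  let ?g = "\<lambda>i. gain (rayleigh M k x) (k i)"
  have g1: "0 < ?g 1" and x1: "0 < x 1"
    using x gain_k1_pos unfolding prob_weights_def by auto
  then have pos: "0 < ?g 1 * x 1"
    by simp
  have "tail_ratio M (weight_step M k x) = (\<Sum>i=2..M. ?g i * x i) / (?g 1 * x 1)"
    unfolding tail_ratio_def weight_step_def
    using pos weight_step_denominator_ge[OF x] by (simp add: sum_divide_distrib[symmetric])
  also have "\<dots> \<le> (\<Sum>i=2..M. gap_factor * ?g 1 * x i) / (?g 1 * x 1)"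
    using x pos gain_tail_le[OF rayleigh_bounds[OF x]] unfolding prob_weights_def
    by (intro divide_right_mono sum_mono mult_right_mono) auto
  also have "\<dots> = gap_factor * tail_ratio M x"
    using g1 x1 unfolding tail_ratio_def by (simp add: sum_distrib_left[symmetric])
  finally show ?thesis .
qed

lemma weight_step_tail_le:
  assumes x: "prob_weights M x" and j: "j \<in> {2..M}"
  shows "weight_step M k x j \<le> gap_factor * (1 + tail_ratio M x) * x j"
proof -
  let ?g = "\<lambda>i. gain (rayleigh M k x) (k i)"
  have g1: "0 < ?g 1" and x1: "0 < x 1" and xj: "0 \<le> x j"
    using x j gain_k1_pos unfolding prob_weights_def by auto
  then have pos: "0 < ?g 1 * x 1"
    by simp
  have "weight_step M k x j \<le> ?g j * x j / (?g 1 * x 1)"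
    unfolding weight_step_def using pos xj j gain_nonneg weight_step_denominator_ge[OF x]
    by (intro divide_left_mono) auto
  also have "\<dots> \<le> gap_factor * ?g 1 * x j / (?g 1 * x 1)"
    using pos xj gain_tail_le[OF rayleigh_bounds[OF x] j] by (intro divide_right_mono mult_right_mono) auto
  also have "\<dots> = gap_factor * (1 / x 1) * x j"
    using g1 by simp
  finally show ?thesis
    unfolding inverse_first_weight[OF x] .
qed

lemma eventually_contracting:
  assumes x: "prob_weights M x"
  obtains n0 \<rho> where "0 < \<rho>" "\<rho> < 1"
    and "\<And>n j. n0 \<le> n \<Longrightarrow> j \<in> {2..M} \<Longrightarrow>
           (weight_step M k ^^ Suc n) x j \<le> \<rho> * (weight_step M k ^^ n) x j"
proof -
  let ?X = "\<lambda>n. (weight_step M k ^^ n) x" and ?q = gap_factor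
  have prob: "prob_weights M (?X n)" for n
    by (induction n) (simp_all add: x prob_weights_weight_step)
  have decay: "tail_ratio M (?X n) \<le> ?q ^ n * tail_ratio M x" for n
  proof (induction n)
    case (Suc n)
    have "tail_ratio M (?X (Suc n)) \<le> ?q * tail_ratio M (?X n)"
      using tail_ratio_weight_step[OF prob] by simp
    also have "\<dots> \<le> ?q * (?q ^ n * tail_ratio M x)"
      using Suc gap_factor_nonneg by (rule mult_left_mono)
    finally show ?case by simp
  qed simp
  define \<epsilon> where "\<epsilon> = (1 - ?q) / 2"
  have \<epsilon>_pos: "0 < \<epsilon>"
    using gap_factor_less_one unfolding \<epsilon>_def by simp
  have "?q * \<epsilon> \<le> \<epsilon>"
    using \<epsilon>_pos gap_factor_nonneg gap_factor_less_one by (intro mult_left_le_one_le) auto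
  moreover have "?q + \<epsilon> = (1 + ?q) / 2"
    unfolding \<epsilon>_def by (simp add: field_simps)
  ultimately have \<epsilon>_bound: "?q * (1 + \<epsilon>) \<le> (1 + ?q) / 2"
    by (simp add: distrib_left)
  have "0 < \<epsilon> / (tail_ratio M x + 1)"
    using \<epsilon>_pos tail_ratio_nonneg[OF x] by simp
  then obtain n0 where n0: "?q ^ n0 < \<epsilon> / (tail_ratio M x + 1)"
    using real_arch_pow_inv gap_factor_less_one by blast
  have small: "tail_ratio M (?X n) \<le> \<epsilon>" if "n0 \<le> n" for n
  proof -
    have "?q ^ n * tail_ratio M x \<le> ?q ^ n0 * (tail_ratio M x + 1)"
      using that gap_factor_nonneg gap_factor_less_one tail_ratio_nonneg[OF x]
      by (intro mult_mono power_decreasing) auto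
    also have "\<dots> \<le> \<epsilon>"
      using n0 tail_ratio_nonneg[OF x] by (simp add: pos_less_divide_eq less_imp_le)
    finally show ?thesis
      using decay[of n] by linarith
  qed
  show ?thesis
  proof
    show "0 < (1 + ?q) / 2" "(1 + ?q) / 2 < 1"
      using gap_factor_nonneg gap_factor_less_one by auto
  next
    fix n j assume n: "n0 \<le> n" and j: "j \<in> {2..M}"
    have xj: "0 \<le> ?X n j"
      using prob[of n] j unfolding prob_weights_def by auto
    have "?X (Suc n) j \<le> ?q * (1 + tail_ratio M (?X n)) * ?X n j"
      using weight_step_tail_le[OF prob j] by simp
    also have "\<dots> \<le> ?q * (1 + \<epsilon>) * ?X n j"
      using small[OF n] gap_factor_nonneg xj by (intro mult_right_mono mult_left_mono) auto
    also have "\<dots> \<le> (1 + ?q) / 2 * ?X n j"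
      using \<epsilon>_bound xj by (rule mult_right_mono)
    finally show "?X (Suc n) j \<le> (1 + ?q) / 2 * ?X n j" .
  qed
qed

end

section \<open>Application to ACI(1)\<close>

lemma gapped_cosines_blk_cos:
  assumes m_pos: "m \<ge> 1"
    and cs: "\<forall>j\<in>{1..m}. (c j)\<^sup>2 + (s j)\<^sup>2 = 1"
    and s_nz: "\<forall>j\<in>{1..m}. s j \<noteq> 0"
    and c_pos: "0 < c 1"
    and c_incr: "\<forall>j\<in>{1..<m}. c j < c (j + 1)"
  shows "gapped_cosines (m+1) (blk_cos m c) (blk_cos m c 2)"
proof -
  have c_le_one: "c j \<le> 1" if "j \<in> {1..m}" for j
  proof -
    have "(c j)\<^sup>2 + (s j)\<^sup>2 = 1"
      using cs that by blast
    then have "(c j)\<^sup>2 \<le> 1"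
      using zero_le_power2[of "s j"] by linarith
    then show ?thesis
      by (simp add: abs_square_le_1)
  qed
  have "(c 1)\<^sup>2 + (s 1)\<^sup>2 = 1" "s 1 \<noteq> 0"
    using cs s_nz m_pos by auto
  then have "(c 1)\<^sup>2 < 1"
    using zero_less_power2[of "s 1"] by linarith
  then have c1_less_one: "c 1 < 1"
    by (simp add: abs_square_less_1)
  have c_step: "c n \<le> c (Suc n)" if "n \<in> {1..<m}" for n
    using c_incr that by fastforce
  have c_mono: "c i \<le> c j" if "1 \<le> i" "i \<le> j" "j \<le> m" for i j
    by (rule lift_Suc_mono_le_ivl[of "{1..<m}" c, OF c_step]) (use that in auto)
  show ?thesis
  proof
    show "1 \<le> m + 1" "0 < blk_cos m c 1"
      using m_pos c_pos by (simp_all add: blk_cos_def)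
    show "blk_cos m c 1 < blk_cos m c 2"
    proof (cases "2 \<le> m")
      case True
      then have "c 1 < c (1 + 1)"
        using c_incr by simp
      then show ?thesis
        using True by (simp add: blk_cos_def numeral_2_eq_2)
    qed (use m_pos c1_less_one in \<open>simp add: blk_cos_def\<close>)
    show "blk_cos m c 2 \<le> 1" "\<forall>i\<in>{1..m+1}. blk_cos m c i \<le> 1"
      using c_le_one by (auto simp: blk_cos_def)
    show "\<forall>i\<in>{2..m+1}. blk_cos m c 2 \<le> blk_cos m c i"
      using c_mono c_le_one by (auto simp: blk_cos_def)
  qed
qed

lemma prob_weights_blk_weight:
  assumes v: "v \<in> carrier_vec (dimA m t)" and "vnorm v = 1" and "m \<ge> 1" and "blk_norm v 1 \<noteq> 0"
  shows "prob_weights (m+1) (blk_weight m t v)"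
proof -
  have "v \<bullet> v = 1"
    using \<open>vnorm v = 1\<close> unfolding vnorm_def by simp
  moreover have "blk_weight m t v 1 \<noteq> 0"
    using assms(3,4) blk_norm_eq_sqrt_blk_weight[of 1 m v t] by auto
  then have "0 < blk_weight m t v 1"
    using blk_weight_nonneg[of m t v 1] by (simp add: less_le)
  ultimately show ?thesis
    unfolding prob_weights_def scalar_prod_self_blk_weight[OF v] using blk_weight_nonneg by auto
qed

lemma aci_blk_weight_eventually_contracting:
  assumes m_pos: "m \<ge> 1"
    and cs: "\<forall>j\<in>{1..m}. (c j)\<^sup>2 + (s j)\<^sup>2 = 1"
    and s_nz: "\<forall>j\<in>{1..m}. s j \<noteq> 0"
    and c_pos: "0 < c 1"
    and c_incr: "\<forall>j\<in>{1..<m}. c j < c (j + 1)"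
    and v0_dim: "v0 \<in> carrier_vec (dimA m t)"
    and v0_unit: "vnorm v0 = 1"
    and v01: "blk_norm v0 1 \<noteq> 0"
  obtains n0 \<rho> where "0 < \<rho>" "\<rho> < 1"
    and "\<And>k j. n0 \<le> k \<Longrightarrow> j \<in> {2..m+1} \<Longrightarrow>
           blk_weight m t (aci (blockA m t c s) v0 (Suc k)) j
             \<le> \<rho>\<^sup>2 * blk_weight m t (aci (blockA m t c s) v0 k) j"
proof -
  let ?X = "\<lambda>n. (weight_step (m+1) (blk_cos m c) ^^ n) (blk_weight m t v0)"
  interpret gapped_cosines "m+1" "blk_cos m c" "blk_cos m c 2"
    using gapped_cosines_blk_cos[OF m_pos cs s_nz c_pos c_incr] .
  obtain n0 \<rho> where \<rho>: "0 < \<rho>" "\<rho> < 1"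
    and contr: "\<And>n j. n0 \<le> n \<Longrightarrow> j \<in> {2..m+1} \<Longrightarrow> ?X (Suc n) j \<le> \<rho> * ?X n j"
    by (rule eventually_contracting[OF prob_weights_blk_weight[OF v0_dim v0_unit m_pos v01]]) (rule that)
  show ?thesis
  proof (rule that[OF \<rho>])
    fix k j assume "n0 \<le> k" "j \<in> {2..m+1}"
    then have "?X (Suc (Suc (2*k))) j \<le> \<rho> * ?X (Suc (2*k)) j"
      by (intro contr) auto
    also have "\<dots> \<le> \<rho> * (\<rho> * ?X (2*k) j)"
      using \<open>n0 \<le> k\<close> \<open>j \<in> {2..m+1}\<close> \<rho> by (intro mult_left_mono contr) auto
    finally show "blk_weight m t (aci (blockA m t c s) v0 (Suc k)) j
        \<le> \<rho>\<^sup>2 * blk_weight m t (aci (blockA m t c s) v0 k) j"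
      unfolding blk_weight_aci[OF v0_dim cs] by (simp add: power2_eq_square mult.assoc)
  qed
qed

theorem lemma4p6:
  fixes m :: nat and t :: bool and c s :: "nat \<Rightarrow> real" and v0 :: "real vec"
  assumes m_pos: "m \<ge> 1"
    and cs: "\<forall>j\<in>{1..m}. (c j)\<^sup>2 + (s j)\<^sup>2 = 1"
    and s_nz: "\<forall>j\<in>{1..m}. s j \<noteq> 0"
    and c_pos: "0 < c 1"
    and c_incr: "\<forall>j\<in>{1..<m}. c j < c (j + 1)"
    and v0_dim: "v0 \<in> carrier_vec (dimA m t)"
    and v0_unit: "vnorm v0 = 1"
    and grade: "grade (blockA m t c s) v0 \<ge> 2"
    and v01: "blk_norm v0 1 \<noteq> 0"
  shows "\<exists>k0 (\<rho>::real). 0 < \<rho> \<and> \<rho> < 1 \<and>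
           (\<forall>k\<ge>k0.
              (\<forall>j\<in>{2..m}. blk_norm (aci (blockA m t c s) v0 (Suc k)) j
                              \<le> \<rho> * blk_norm (aci (blockA m t c s) v0 k) j)
            \<and> (t \<longrightarrow> last_norm m (aci (blockA m t c s) v0 (Suc k))
                              \<le> \<rho> * last_norm m (aci (blockA m t c s) v0 k)))"
proof -
  let ?v = "aci (blockA m t c s) v0"
  obtain n0 \<rho> where \<rho>: "0 < \<rho>" "\<rho> < 1"
    and weights: "\<And>k j. n0 \<le> k \<Longrightarrow> j \<in> {2..m+1} \<Longrightarrow>
                    blk_weight m t (?v (Suc k)) j \<le> \<rho>\<^sup>2 * blk_weight m t (?v k) j"
    by (rule aci_blk_weight_eventually_contracting[OF m_pos cs s_nz c_pos c_incr v0_dim v0_unit v01])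
      (rule that)
  have sqrt_le: "sqrt a \<le> \<rho> * sqrt b" if "a \<le> \<rho>\<^sup>2 * b" for a b
    using real_sqrt_le_mono[OF that] \<rho> by (simp add: real_sqrt_mult)
  have blocks: "blk_norm (?v (Suc k)) j \<le> \<rho> * blk_norm (?v k) j" if "n0 \<le> k" "j \<in> {2..m}" for k j
  proof -
    have j: "j \<in> {1..m}" "j \<in> {2..m+1}"
      using that by auto
    show ?thesis
      using sqrt_le[OF weights[OF \<open>n0 \<le> k\<close> j(2)]]
      unfolding blk_norm_eq_sqrt_blk_weight[OF j(1), where t = t] .
  qed
  have last: "last_norm m (?v (Suc k)) \<le> \<rho> * last_norm m (?v k)" if "n0 \<le> k" t for k
    using sqrt_le[OF weights[OF \<open>n0 \<le> k\<close>, of "m+1"]] m_pos \<open>t\<close>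
    by (simp add: last_norm_eq_sqrt_blk_weight)
  show ?thesis
    using \<rho> blocks last by blast
qed

end
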